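(* Let $n\geq 2$ and $2\leq i\leq n$. For any $\sigma\in S_{n-1}(1,i)$, $$Q(\sigma)=(-1)^{i-1}\sum_{2\leq m_1<\dots<m_{i-1}\leq n}Q\big(\sigma C_{m_{i-1}}^{-1}\cdots C_{m_1}^{-1}\big).$$
   Context: Let $y_1,\dots,y_n$ be indeterminates and $u_{ij}:=y_i-y_j$ (so $u_{ij}+u_{ji}=0$ and $u_{ij}+u_{jk}+u_{ki}=0$). For $\sigma\in S_n$ set $Q(\sigma):=1/(u_{\sigma(1)\sigma(2)}u_{\sigma(2)\sigma(3)}\cdots u_{\sigma(n-1)\sigma(n)})$, an element of the field of rational functions in the $y_i$. Permutations are composed right-to-left: $(\sigma\tau)(k)=\sigma(\tau(k))$. $S_{n-1}\subset S_n$ is the subgroup of $\tau$ with $\tau(1)=1$, $S_{n-1}(1,i)=\{\tau\cdot(1,i):\tau\in S_{n-1}\}$, and for $m\geq 2$, $C_m$ is the cycle $(1,m,m-1,\dots,2)$ (i.e. $1\mapsto m\mapsto m-1\mapsto\dots\mapsto 2\mapsto 1$). *)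

theory Defs
  imports "HOL-Combinatorics.Transposition" "HOL-Combinatorics.Permutations"
begin

text \<open>The indeterminates y_1..y_n are rendered as pairwise distinct elements y 1, ..., y n
  of an arbitrary field; u_ij = y i - y j.\<close>

definition Qf :: "(nat \<Rightarrow> 'a::field) \<Rightarrow> nat \<Rightarrow> (nat \<Rightarrow> nat) \<Rightarrow> 'a" where
  "Qf y n \<sigma> = 1 / (\<Prod>k\<in>{1..<n}. (y (\<sigma> k) - y (\<sigma> (Suc k))))"

definition Ccyc :: "nat \<Rightarrow> nat \<Rightarrow> nat" where
  "Ccyc m k = (if k = 1 then m else if 2 \<le> k \<and> k \<le> m then k - 1 else k)"

text \<open>For ms = [m_1, ..., m_r], the permutation C_{m_r}^{-1} \<circ> ... \<circ> C_{m_1}^{-1}.\<close>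
definition Cinv_prod :: "nat list \<Rightarrow> nat \<Rightarrow> nat" where
  "Cinv_prod ms = fold (\<lambda>m f. inv (Ccyc m) \<circ> f) ms id"

end

theory Submission
  imports Defs
begin

text \<open>Write the sequence y \<circ> \<sigma> on 1..n as \<alpha>, x, \<beta> with x = y (\<sigma> i).
  Composing \<sigma> with C_{m_{i-1}}^{-1} ... C_{m_1}^{-1} moves x to the front and
  shuffles the reversed \<alpha> into \<beta>, the m_j - 2 being the positions occupied by
  \<alpha>; every shuffle arises exactly once.  The claim thus becomes the shuffle identity
  \<Sum>_{shuffles w of u and v} Q(x, w) = (-1)^|u| Q(rev u, x, v),
  proved by induction on |u| + |v|: splitting the shuffles by their first letter a
  (of u) or b (of v), the two induction hypotheses combine through the partial fraction
  1/((x - a)(a - b)) - 1/((x - b)(a - b)) = 1/((x - a)(x - b)).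
  Only the distinctness of the values y (\<sigma> k) is used.\<close>

fun Qseq :: "'a::field list \<Rightarrow> 'a" where
  "Qseq (a # b # xs) = inverse (a - b) * Qseq (b # xs)"
| "Qseq _ = 1"

lemma Qseq_append: "Qseq (xs @ a # b # zs) = Qseq (xs @ [a]) * inverse (a - b) * Qseq (b # zs)"
  by (induction xs rule: Qseq.induct) (simp_all add: mult.assoc)

lemma Qseq_snoc: "Qseq (xs @ [a, b]) = Qseq (xs @ [a]) * inverse (a - b)"
  using Qseq_append[of xs a b "[]"] by simp

lemma inverse_diff_commute: "inverse (b - a) = - inverse (a - b :: 'a::field)"
  by (metis inverse_minus_eq minus_diff_eq)

lemma Qseq_rev: "Qseq (rev xs) = (-1) ^ (length xs - 1) * Qseq xs"
proof (induction xs rule: Qseq.induct)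
  case (1 a b xs)
  have "Qseq (rev (a # b # xs)) = Qseq ((rev xs @ [b]) @ [a])" by simp
  also have "\<dots> = Qseq (rev (b # xs)) * inverse (b - a)"
    using Qseq_snoc[of "rev xs" b a] by simp
  also have "\<dots> = (-1) ^ length xs * Qseq (b # xs) * - inverse (a - b)"
    using 1 by (simp add: inverse_diff_commute[of a b])
  finally show ?case by (simp add: algebra_simps)
qed auto

lemma Qseq_insert_partial_fraction:
  assumes "x \<noteq> a" "x \<noteq> b" "a \<noteq> b"
  shows "(inverse (x - a) - inverse (x - b)) * Qseq (w @ a # b # v) = - Qseq (w @ a # x # b # v)"
proof -
  have "(inverse (x - a) - inverse (x - b)) * inverse (a - b) = inverse (x - a) * inverse (x - b)"
    using assms by (simp add: field_simps)
  then have partial_fraction: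
    "(inverse (x - a) - inverse (x - b)) * inverse (a - b) = - (inverse (a - x) * inverse (x - b))"
    by (simp add: inverse_diff_commute[of x a])
  have "(inverse (x - a) - inverse (x - b)) * Qseq (w @ a # b # v) =
      Qseq (w @ [a]) * ((inverse (x - a) - inverse (x - b)) * inverse (a - b)) * Qseq (b # v)"
    by (simp only: Qseq_append mult_ac)
  also have "\<dots> = Qseq (w @ [a]) * - (inverse (a - x) * inverse (x - b)) * Qseq (b # v)"
    by (simp only: partial_fraction)
  also have "\<dots> = - Qseq (w @ a # x # b # v)"
    by (simp add: Qseq_append mult_ac)
  finally show ?thesis .
qed

text \<open>The shuffle of u and v in which the entries of u occupy the positions in M.\<close>

definition interleave :: "nat set \<Rightarrow> 'a list \<Rightarrow> 'a list \<Rightarrow> 'a list" where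
  "interleave M u v = map (\<lambda>k. if k \<in> M then u ! card {m\<in>M. m < k} else v ! card ({..<k} - M))
      [0..<length u + length v]"

lemma length_interleave [simp]: "length (interleave M u v) = length u + length v"
  by (simp add: interleave_def)

lemma nth_interleave:
  "k < length u + length v \<Longrightarrow>
    interleave M u v ! k = (if k \<in> M then u ! card {m\<in>M. m < k} else v ! card ({..<k} - M))"
  by (simp add: interleave_def)

lemma interleave_Nil_left: "interleave {} [] v = v"
  by (simp add: interleave_def map_nth)

lemma interleave_Nil_right: "interleave {0..<length u} u [] = u"
proof -
  have "{m. m < length u \<and> m < k} = {..<k}" if "k < length u" for k
    using that by auto
  then show ?thesis
    by (auto simp: interleave_def intro!: nth_equalityI)
qed

lemma interleave_Cons_left: "interleave (insert 0 (Suc ` M)) (a # u) v = a # interleave M u v"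
proof (rule nth_equalityI)
  have below: "card {m \<in> insert 0 (Suc ` M). m < Suc k} = Suc (card {m\<in>M. m < k})" for k
  proof -
    have "{m \<in> insert 0 (Suc ` M). m < Suc k} = insert 0 (Suc ` {m\<in>M. m < k})"
      by auto
    then show ?thesis
      by (simp add: card_image)
  qed
  have rest: "{..<Suc k} - insert 0 (Suc ` M) = Suc ` ({..<k} - M)" for k
    by (auto simp: lessThan_Suc_eq_insert_0)
  have mem: "Suc k \<in> insert 0 (Suc ` M) \<longleftrightarrow> k \<in> M" for k
    by auto
  fix j assume "j < length (interleave (insert 0 (Suc ` M)) (a # u) v)"
  then show "interleave (insert 0 (Suc ` M)) (a # u) v ! j = (a # interleave M u v) ! j"
    by (cases j)
      (simp_all add: nth_interleave mem below rest card_image insertI1 del: insert_iff lessThan_Suc)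
qed simp

lemma interleave_Cons_right: "interleave (Suc ` M) u (b # v) = b # interleave M u v"
proof (rule nth_equalityI)
  have below: "{m \<in> Suc ` M. m < Suc k} = Suc ` {m\<in>M. m < k}" for k
    by auto
  have rest: "card ({..<Suc k} - Suc ` M) = Suc (card ({..<k} - M))" for k
  proof -
    have "{..<Suc k} - Suc ` M = insert 0 (Suc ` ({..<k} - M))"
      by (auto simp: lessThan_Suc_eq_insert_0)
    then show ?thesis
      by (simp add: card_image)
  qed
  have mem: "Suc k \<in> Suc ` M \<longleftrightarrow> k \<in> M" for k
    by auto
  fix j assume "j < length (interleave (Suc ` M) u (b # v))"
  then show "interleave (Suc ` M) u (b # v) ! j = (b # interleave M u v) ! j"
    by (cases j) (simp_all add: nth_interleave mem below rest card_image del: lessThan_Suc)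
qed simp

lemma sum_subsets_image:
  assumes "inj h"
  shows "(\<Sum>M | M \<subseteq> h ` A \<and> card M = r. g M) = (\<Sum>M | M \<subseteq> A \<and> card M = r. g (h ` M))"
proof -
  have "{M. M \<subseteq> h ` A \<and> card M = r} = (`) h ` {M. M \<subseteq> A \<and> card M = r}"
    using assms by (auto simp: subset_image_iff card_image inj_on_subset)
  moreover have "inj_on ((`) h) X" for X
    using assms by (simp add: inj_on_def inj_image_eq_iff)
  ultimately show ?thesis
    by (simp add: sum.reindex)
qed

lemma sum_subsets_insert:
  assumes "finite B" "a \<notin> B"
  shows "(\<Sum>M | M \<subseteq> insert a B \<and> card M = Suc r. g M) =
     (\<Sum>M | M \<subseteq> B \<and> card M = r. g (insert a M)) + (\<Sum>M | M \<subseteq> B \<and> card M = Suc r. g M)"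
proof -
  have split: "{M. M \<subseteq> insert a B \<and> card M = Suc r} =
      insert a ` {M. M \<subseteq> B \<and> card M = r} \<union> {M. M \<subseteq> B \<and> card M = Suc r}"
  proof (intro equalityI subsetI)
    fix M assume M: "M \<in> {M. M \<subseteq> insert a B \<and> card M = Suc r}"
    then have "finite M"
      using assms(1) finite_subset by auto
    show "M \<in> insert a ` {M. M \<subseteq> B \<and> card M = r} \<union> {M. M \<subseteq> B \<and> card M = Suc r}"
    proof (cases "a \<in> M")
      case True
      then have "M = insert a (M - {a})" "M - {a} \<subseteq> B" "card (M - {a}) = r"
        using M \<open>finite M\<close> by auto
      then show ?thesis
        by blast
    next
      case False
      then show ?thesis
        using M by blast
    qed
  next
    fix M assume "M \<in> insert a ` {M. M \<subseteq> B \<and> card M = r} \<union> {M. M \<subseteq> B \<and> card M = Suc r}"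
    then show "M \<in> {M. M \<subseteq> insert a B \<and> card M = Suc r}"
    proof
      assume "M \<in> insert a ` {M. M \<subseteq> B \<and> card M = r}"
      then obtain X where "M = insert a X" "X \<subseteq> B" "card X = r"
        by blast
      moreover have "finite X" "a \<notin> X"
        using \<open>X \<subseteq> B\<close> assms finite_subset by auto
      ultimately show ?thesis
        by auto
    qed blast
  qed
  have "inj_on (insert a) {M. M \<subseteq> B \<and> card M = r}"
    using assms(2) by (intro inj_onI) (metis insert_ident mem_Collect_eq subsetD)
  moreover have "finite {M. M \<subseteq> B \<and> card M = k}" for k
    using assms(1) by simp
  moreover have "insert a ` {M. M \<subseteq> B \<and> card M = r} \<inter> {M. M \<subseteq> B \<and> card M = Suc r} = {}"
    using assms(2) by blast
  ultimately show ?thesis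
    unfolding split by (simp add: sum.union_disjoint sum.reindex)
qed

lemma sum_subsets_upt_Suc:
  "(\<Sum>M | M \<subseteq> {0..<Suc N} \<and> card M = Suc r. g M) =
     (\<Sum>M | M \<subseteq> {0..<N} \<and> card M = r. g (insert 0 (Suc ` M))) +
     (\<Sum>M | M \<subseteq> {0..<N} \<and> card M = Suc r. g (Suc ` M))"
  by (simp add: atLeast0_lessThan_Suc_eq_insert_0 sum_subsets_insert sum_subsets_image
      del: image_Suc_atLeastLessThan)

lemma sum_Qseq_interleave:
  fixes x :: "'a::field"
  assumes "distinct (x # u @ v)"
  shows "(\<Sum>M | M \<subseteq> {0..<length u + length v} \<and> card M = length u. Qseq (x # interleave M u v))
         = (-1) ^ length u * Qseq (rev u @ x # v)"
  using assms
proof (induction "length u + length v" arbitrary: x u v)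
  case 0
  then show ?case
    by (simp add: interleave_Nil_left cong: conj_cong)
next
  case (Suc N)
  consider "u = []" | "v = []" | a u' b v' where "u = a # u'" "v = b # v'"
    by (meson list.exhaust)
  then show ?case
  proof cases
    case 1
    have "{M. M \<subseteq> {0..<length v} \<and> card M = 0} = {{}}"
      by (auto dest: finite_subset)
    then show ?thesis
      using 1 by (simp add: interleave_Nil_left)
  next
    case 2
    have "M = {0..<length u}" if "M \<subseteq> {0..<length u}" "card M = length u" for M
      using card_subset_eq[OF finite_atLeastLessThan that(1)] that(2) by simp
    then have "{M. M \<subseteq> {0..<length u} \<and> card M = length u} = {{0..<length u}}"
      by auto
    then show ?thesis
      using 2 Qseq_rev[of "x # u"] by (simp add: interleave_Nil_right)
  next
    case 3
    have N: "N = length u' + length v" "N = length u + length v'"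
      using Suc.hyps 3 by auto
    have distinct: "x \<noteq> a" "x \<noteq> b" "a \<noteq> b" "distinct (a # u' @ v)" "distinct (b # u @ v')"
      using Suc.prems 3 by auto
    have "(\<Sum>M | M \<subseteq> {0..<length u + length v} \<and> card M = length u. Qseq (x # interleave M u v))
        = (\<Sum>M | M \<subseteq> {0..<N} \<and> card M = length u'. Qseq (x # interleave (insert 0 (Suc ` M)) u v))
          + (\<Sum>M | M \<subseteq> {0..<N} \<and> card M = length u. Qseq (x # interleave (Suc ` M) u v))"
      using Suc.hyps 3 by (simp add: sum_subsets_upt_Suc)
    also have "\<dots> = inverse (x - a) * (\<Sum>M | M \<subseteq> {0..<N} \<and> card M = length u'. Qseq (a # interleave M u' v))
        + inverse (x - b) * (\<Sum>M | M \<subseteq> {0..<N} \<and> card M = length u. Qseq (b # interleave M u v'))"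
      using 3 by (simp add: interleave_Cons_left interleave_Cons_right sum_distrib_left)
    also have "\<dots> = inverse (x - a) * ((-1) ^ length u' * Qseq (rev u' @ a # b # v'))
        + inverse (x - b) * ((-1) ^ Suc (length u') * Qseq (rev u' @ a # b # v'))"
      using Suc.hyps(1)[OF N(1) distinct(4)] Suc.hyps(1)[OF N(2) distinct(5)] 3
      by (simp only: N) simp
    also have "\<dots> = (-1) ^ length u' * ((inverse (x - a) - inverse (x - b)) * Qseq (rev u' @ a # b # v'))"
      by (simp add: algebra_simps)
    also have "\<dots> = (-1) ^ length u * Qseq (rev u @ x # v)"
      using 3 Qseq_insert_partial_fraction[OF distinct(1-3)] by simp
    finally show ?thesis .
  qed
qed

lemma Qseq_map_upt: "Qseq (map h [a..<Suc (a + d)]) = inverse (\<Prod>k\<in>{a..<a + d}. h k - h (Suc k))"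
proof (induction d arbitrary: a)
  case (Suc d)
  have "[a..<Suc (a + Suc d)] = a # Suc a # [Suc (Suc a)..<Suc (Suc a + d)]"
    by (simp add: upt_conv_Cons del: upt_Suc)
  moreover have "[Suc a..<Suc (Suc a + d)] = Suc a # [Suc (Suc a)..<Suc (Suc a + d)]"
    by (simp add: upt_conv_Cons del: upt_Suc)
  ultimately have "Qseq (map h [a..<Suc (a + Suc d)]) =
      inverse (h a - h (Suc a)) * Qseq (map h [Suc a..<Suc (Suc a + d)])"
    by (simp del: upt_Suc)
  also have "\<dots> = inverse (\<Prod>k\<in>{a..<a + Suc d}. h k - h (Suc k))"
    using Suc.IH[of "Suc a"]
    by (simp add: prod.atLeast_Suc_lessThan inverse_mult_distrib del: prod.op_ivl_Suc)
  finally show ?case .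
qed simp

lemma Qf_eq_Qseq: "1 \<le> n \<Longrightarrow> Qf y n g = Qseq (map (y \<circ> g) [1..<Suc n])"
  using Qseq_map_upt[of "y \<circ> g" 1 "n - 1"] by (simp add: Qf_def divide_inverse)

lemma inv_Ccyc:
  assumes "2 \<le> m"
  shows "inv (Ccyc m) k = (if k = m then 1 else if 1 \<le> k \<and> k < m then Suc k else k)"
proof (rule inv_f_eq)
  show "inj (Ccyc m)"
    using assms by (intro injI) (auto simp: Ccyc_def split: if_splits)
qed (use assms in \<open>auto simp: Ccyc_def\<close>)

lemma Cinv_prod_sorted:
  assumes "sorted_wrt (<) ms" "\<forall>m\<in>set ms. 2 \<le> m" "1 \<le> k"
  shows "Cinv_prod ms k = (if k \<in> set ms \<or> k = 1 then 1 else k) + card {m \<in> set ms. k < m}"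
  using assms
proof (induction ms rule: rev_induct)
  case Nil
  then show ?case
    by (simp add: Cinv_prod_def)
next
  case (snoc m ms)
  have below_m: "\<forall>x\<in>set ms. x < m" and "2 \<le> m"
    using snoc.prems(1,2) by (auto simp: sorted_wrt_append)
  have IH: "Cinv_prod ms k = (if k \<in> set ms \<or> k = 1 then 1 else k) + card {x \<in> set ms. k < x}"
    using snoc.IH snoc.prems by (simp add: sorted_wrt_append)
  have step: "Cinv_prod (ms @ [m]) k = inv (Ccyc m) (Cinv_prod ms k)"
    by (simp add: Cinv_prod_def)
  show ?case
  proof (cases "m \<le> k")
    case True
    then have "k \<notin> set ms" "k \<noteq> 1" and none_above: "{x \<in> set ms. k < x} = {}"
      using below_m \<open>2 \<le> m\<close> by auto
    then have "Cinv_prod ms k = k"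
      using IH unfolding none_above by simp
    then have "Cinv_prod (ms @ [m]) k = (if k = m then 1 else k)"
      using step True \<open>2 \<le> m\<close> by (simp add: inv_Ccyc)
    moreover have "{x \<in> set (ms @ [m]). k < x} = {}" "k \<in> set (ms @ [m]) \<longleftrightarrow> k = m"
      using True none_above \<open>k \<notin> set ms\<close> by auto
    ultimately show ?thesis
      using \<open>k \<noteq> 1\<close> by (simp only: card.empty) simp
  next
    case False
    have "{x \<in> set ms. k < x} \<subseteq> {k<..<m}"
      using below_m by auto
    then have "card {x \<in> set ms. k < x} \<le> m - Suc k"
      using card_mono[of "{k<..<m}"] by fastforce
    then have "1 \<le> Cinv_prod ms k" "Cinv_prod ms k < m"
      using IH False snoc.prems(2,3) by (auto split: if_splits)
    then have "Cinv_prod (ms @ [m]) k = Suc (Cinv_prod ms k)"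
      using step \<open>2 \<le> m\<close> by (simp add: inv_Ccyc)
    moreover have "{x \<in> set (ms @ [m]). k < x} = insert m {x \<in> set ms. k < x}"
      "m \<notin> {x \<in> set ms. k < x}"
      using False below_m by auto
    moreover have "k \<in> set (ms @ [m]) \<longleftrightarrow> k \<in> set ms"
      using False by auto
    ultimately show ?thesis
      unfolding IH by simp
  qed
qed

lemma Cinv_prod_shifted_set:
  fixes M :: "nat set"
  assumes "finite M"
  defines "P \<equiv> Cinv_prod (sorted_list_of_set ((+) 2 ` M))"
  shows "P 1 = Suc (card M)"
    and "P (k + 2) = (if k \<in> M then 1 else k + 2) + card {m \<in> M. k < m}"
proof -
  have P: "P j = (if j \<in> (+) 2 ` M \<or> j = 1 then 1 else j) + card {m \<in> (+) 2 ` M. j < m}"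
    if "1 \<le> j" for j
    unfolding P_def using assms that by (subst Cinv_prod_sorted) auto
  have "{m \<in> (+) 2 ` M. 1 < m} = (+) 2 ` M"
    by auto
  then show "P 1 = Suc (card M)"
    using P[of 1] by (simp add: card_image inj_on_def)
  have "{m \<in> (+) 2 ` M. k + 2 < m} = (+) 2 ` {m \<in> M. k < m}"
    and "k + 2 \<in> (+) 2 ` M \<longleftrightarrow> k \<in> M"
    by auto
  then show "P (k + 2) = (if k \<in> M then 1 else k + 2) + card {m \<in> M. k < m}"
    using P[of "k + 2"] by (simp add: card_image inj_on_def)
qed

lemma card_less_plus_card_greater:
  fixes k :: "'a::linorder"
  assumes "finite M"
  shows "card {m\<in>M. m < k} + card {m\<in>M. k < m} + (if k \<in> M then 1 else 0) = card M"
proof -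
  have "M = {m\<in>M. m < k} \<union> {m\<in>M. k < m} \<union> (M \<inter> {k})"
    by auto
  also have "card \<dots> = card {m\<in>M. m < k} + card {m\<in>M. k < m} + card (M \<inter> {k})"
    using assms by (subst card_Un_disjoint; auto)+
  finally show ?thesis
    by (simp split: if_splits)
qed

lemma card_lessThan_diff_plus_card_less: "card ({..<k} - M) + card {m\<in>M. m < k} = (k::nat)"
proof -
  have "{..<k} = ({..<k} - M) \<union> {m\<in>M. m < k}"
    by auto
  then have "card {..<k} = card ({..<k} - M) + card {m\<in>M. m < k}"
    by (subst card_Un_disjoint[symmetric]) auto
  then show ?thesis
    by simp
qed

lemma map_comp_Cinv_prod_eq_interleave:
  assumes "1 \<le> i" "i \<le> n" "M \<subseteq> {0..<n - 1}" "card M = i - 1"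
  shows "map (g \<circ> Cinv_prod (sorted_list_of_set ((+) 2 ` M))) [1..<Suc n] =
         g i # interleave M (rev (map g [1..<i])) (map g [Suc i..<Suc n])"
proof (rule nth_equalityI)
  let ?P = "Cinv_prod (sorted_list_of_set ((+) 2 ` M))"
  have fin: "finite M"
    using assms(3) finite_subset by blast
  fix j assume "j < length (map (g \<circ> ?P) [1..<Suc n])"
  then have "j < n"
    by (simp del: upt_Suc)
  show "map (g \<circ> ?P) [1..<Suc n] ! j = (g i # interleave M (rev (map g [1..<i])) (map g [Suc i..<Suc n])) ! j"
  proof (cases j)
    case 0
    then show ?thesis
      using \<open>j < n\<close> Cinv_prod_shifted_set(1)[OF fin] assms by (simp del: upt_Suc)
  next
    case (Suc k)
    let ?below = "card {m\<in>M. m < k}" and ?above = "card {m\<in>M. k < m}"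
    have lhs: "map (g \<circ> ?P) [1..<Suc n] ! j = g (?P (k + 2))"
      using Suc \<open>j < n\<close> by (simp add: add.commute del: upt_Suc)
    have rhs: "(g i # interleave M (rev (map g [1..<i])) (map g [Suc i..<Suc n])) ! j =
        (if k \<in> M then rev (map g [1..<i]) ! ?below
         else map g [Suc i..<Suc n] ! card ({..<k} - M))"
      using Suc \<open>j < n\<close> assms by (simp add: interleave_def)
    have split: "?below + ?above + (if k \<in> M then 1 else 0) = i - 1"
      using card_less_plus_card_greater[OF fin, of k] assms(4) by simp
    have "{m\<in>M. k < m} \<subseteq> {k<..<n - 1}"
      using assms(3) by auto
    then have "?above \<le> n - 2 - k"
      using card_mono[of "{k<..<n - 1}"] by fastforce
    show ?thesis
    proof (cases "k \<in> M")
      case True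
      then have "?P (k + 2) = Suc ?above"
        using Cinv_prod_shifted_set(2)[OF fin, of k] by simp
      moreover have "?below < i - 1" "i - 1 - Suc ?below = ?above"
        using split True by auto
      ultimately show ?thesis
        using lhs rhs True by (simp add: rev_nth del: upt_Suc)
    next
      case False
      then have "?P (k + 2) = k + 2 + ?above"
        using Cinv_prod_shifted_set(2)[OF fin, of k] by simp
      moreover have "card ({..<k} - M) < n - i" "Suc i + card ({..<k} - M) = k + 2 + ?above"
        using split False card_lessThan_diff_plus_card_less[of k M] \<open>?above \<le> n - 2 - k\<close>
          \<open>j < n\<close> Suc assms(1,2) by auto
      ultimately show ?thesis
        using lhs rhs False by (simp del: upt_Suc)
    qed
  qed
qed (use assms in simp)

lemma Qf_eq_alternating_sum_Cinv_prod:
  fixes y :: "nat \<Rightarrow> 'a::field"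
  assumes "1 \<le> i" "i \<le> n" and distinct: "distinct (map (y \<circ> \<sigma>) [1..<Suc n])"
  shows "Qf y n \<sigma> = (-1) ^ (i - 1) *
    (\<Sum>M | M \<subseteq> {2..n} \<and> card M = i - 1. Qf y n (\<sigma> \<circ> Cinv_prod (sorted_list_of_set M)))"
proof -
  define g where "g = y \<circ> \<sigma>"
  define \<alpha> where "\<alpha> = map g [1..<i]"
  define \<beta> where "\<beta> = map g [Suc i..<Suc n]"
  have "[1..<Suc n] = [1..<i] @ i # [Suc i..<Suc n]"
    using assms(1,2) upt_add_eq_append[of 1 i "Suc n - i"] by (simp add: upt_conv_Cons del: upt_Suc)
  then have seq: "map g [1..<Suc n] = \<alpha> @ g i # \<beta>"
    by (simp add: \<alpha>_def \<beta>_def)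
  have shift: "{2..n} = (+) 2 ` {0..<n - 1}"
    using assms(1,2) image_add_atLeastLessThan[of 2 0 "n - 1"]
    by (simp add: atLeastLessThanSuc_atLeastAtMost)
  have "(\<Sum>M | M \<subseteq> {2..n} \<and> card M = i - 1. Qf y n (\<sigma> \<circ> Cinv_prod (sorted_list_of_set M)))
      = (\<Sum>M | M \<subseteq> {0..<n - 1} \<and> card M = i - 1.
           Qf y n (\<sigma> \<circ> Cinv_prod (sorted_list_of_set ((+) 2 ` M))))"
    unfolding shift by (rule sum_subsets_image) simp
  also have "\<dots> = (\<Sum>M | M \<subseteq> {0..<n - 1} \<and> card M = i - 1. Qseq (g i # interleave M (rev \<alpha>) \<beta>))"
  proof (rule sum.cong[OF refl])
    fix M assume "M \<in> {M. M \<subseteq> {0..<n - 1} \<and> card M = i - 1}"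
    then have "map (g \<circ> Cinv_prod (sorted_list_of_set ((+) 2 ` M))) [1..<Suc n] =
        g i # interleave M (rev \<alpha>) \<beta>"
      unfolding \<alpha>_def \<beta>_def using assms(1,2) by (intro map_comp_Cinv_prod_eq_interleave) auto
    then show "Qf y n (\<sigma> \<circ> Cinv_prod (sorted_list_of_set ((+) 2 ` M))) =
        Qseq (g i # interleave M (rev \<alpha>) \<beta>)"
      using assms(1,2) by (simp add: Qf_eq_Qseq g_def comp_assoc del: upt_Suc)
  qed
  also have "\<dots> = (-1) ^ (i - 1) * Qseq (\<alpha> @ g i # \<beta>)"
  proof -
    have "distinct (g i # rev \<alpha> @ \<beta>)"
      using distinct unfolding g_def[symmetric] seq by auto
    moreover have "length (rev \<alpha>) = i - 1" "length (rev \<alpha>) + length \<beta> = n - 1"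
      using assms(1,2) by (auto simp: \<alpha>_def \<beta>_def)
    ultimately show ?thesis
      using sum_Qseq_interleave[of "g i" "rev \<alpha>" \<beta>] by simp
  qed
  also have "\<dots> = (-1) ^ (i - 1) * Qf y n \<sigma>"
    using assms(1,2) seq[unfolded g_def] by (simp add: Qf_eq_Qseq g_def del: upt_Suc)
  finally show ?thesis
    by (simp flip: power_add add: mult.assoc[symmetric])
qed

theorem lemma3p5:
  fixes y :: "nat \<Rightarrow> 'a::field" and n i :: nat and \<sigma> :: "nat \<Rightarrow> nat"
  assumes "n \<ge> 2" and "2 \<le> i" and "i \<le> n"
    and "inj_on y {1..n}"
    and "\<exists>\<tau>. \<tau> permutes {1..n} \<and> \<tau> 1 = 1 \<and> \<sigma> = \<tau> \<circ> transpose 1 i"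
  shows "Qf y n \<sigma> = (-1) ^ (i - 1) *
    (\<Sum>M | M \<subseteq> {2..n} \<and> card M = i - 1.
        Qf y n (\<sigma> \<circ> Cinv_prod (sorted_list_of_set M)))"
proof (rule Qf_eq_alternating_sum_Cinv_prod)
  obtain \<tau> where "\<tau> permutes {1..n}" "\<sigma> = \<tau> \<circ> transpose 1 i"
    using assms(5) by blast
  then have "\<sigma> permutes {1..n}"
    using assms(2,3) by (simp add: permutes_compose permutes_swap_id)
  then have "inj_on (y \<circ> \<sigma>) {1..n}"
    using assms(4) by (simp add: comp_inj_on permutes_image permutes_inj_on)
  then show "distinct (map (y \<circ> \<sigma>) [1..<Suc n])"
    by (simp add: distinct_map atLeastLessThanSuc_atLeastAtMost del: upt_Suc)
qed (use assms in auto)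

end
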